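(* Let $G=(X,b,m,c)$ be a weighted graph with $c=0$, let $p\in(1,\infty)$, let $W\subseteq X$ be finite and $\psi,\theta\colon X\to\mathbb{R}$. Let $u$ be a solution to the obstacle problem in $K_{\psi,\theta}(W)$. If $v\in F^p(\overline W)$ (respectively $v\in D^p(\overline W)$) satisfies $\Delta_pv\ge0$ on $W$ and $u\wedge v\in K_{\psi,\theta}(W)$, then $v\ge u$ on $W$.
   Context: Weighted graph $G=(X,b,m,c)$: $X$ countably infinite; $b$ symmetric, nonnegative, zero on the diagonal, $\sum_yb(x,y)<\infty$; $m>0$; $c\ge0$; $x\sim y$ iff $b(x,y)>0$; $X$ connected. $\partial_eW=\{y\in X\setminus W:y\sim z\text{ for some }z\in W\}$, $\overline W=W\cup\partial_eW$. $a^{\langle p-1\rangle}=|a|^{p-2}a$. $F^p(U)=\{f\colon X\to\mathbb{R}:\sum_yb(x,y)|f(x)-f(y)|^{p-1}<\infty\ \forall x\in U\}$; $\Delta_pf(x)=\frac1{m(x)}\sum_{y\in X}b(x,y)(f(x)-f(y))^{\langle p-1\rangle}$. $\mathcal{E}_{p,U}(u,w)=\frac12\sum_{x,y\in U}b(x,y)(u(x)-u(y))^{\langle p-1\rangle}(w(x)-w(y))$. $D^p(\overline W)=\{v:\sum_{x,y\in\overline W}b(x,y)|v(x)-v(y)|^p<\infty\}$. $K_{\psi,\theta}(W)=\{v\in D^p(\overline W):v\ge\psi\text{ on }W,\ v=\theta\text{ on }\partial_eW\}$. A solution to the obstacle problem in $K_{\psi,\theta}(W)$ is $u\in K_{\psi,\theta}(W)$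 with $\mathcal{E}_{p,\overline W}(u,v-u)\ge0$ for all $v\in K_{\psi,\theta}(W)$. $u\wedge v$ is the pointwise minimum. *)

theory Defs
  imports "HOL-Analysis.Analysis"
begin

text \<open>Weighted graphs on a vertex type 'x; X = UNIV :: 'x set.\<close>

definition weighted_graph :: "('x \<Rightarrow> 'x \<Rightarrow> real) \<Rightarrow> ('x \<Rightarrow> real) \<Rightarrow> ('x \<Rightarrow> real) \<Rightarrow> bool" where
  "weighted_graph b m c \<longleftrightarrow>
     countable (UNIV :: 'x set) \<and> infinite (UNIV :: 'x set) \<and>
     (\<forall>x y. b x y = b y x) \<and> (\<forall>x y. b x y \<ge> 0) \<and> (\<forall>x. b x x = 0) \<and>
     (\<forall>x. (b x) summable_on UNIV) \<and>
     (\<forall>x. m x > 0) \<and> (\<forall>x. c x \<ge> 0) \<and>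
     (\<forall>x y. (\<lambda>s t. b s t > 0)\<^sup>*\<^sup>* x y)"

definition sgnpow :: "real \<Rightarrow> real \<Rightarrow> real" where
  "sgnpow q a = \<bar>a\<bar> powr (q - 2) * a"

definition ext_boundary :: "('x \<Rightarrow> 'x \<Rightarrow> real) \<Rightarrow> 'x set \<Rightarrow> 'x set" where
  "ext_boundary b W = {y. y \<notin> W \<and> (\<exists>z\<in>W. b y z > 0)}"

definition gclosure :: "('x \<Rightarrow> 'x \<Rightarrow> real) \<Rightarrow> 'x set \<Rightarrow> 'x set" where
  "gclosure b W = W \<union> ext_boundary b W"

definition Fp :: "('x \<Rightarrow> 'x \<Rightarrow> real) \<Rightarrow> real \<Rightarrow> 'x set \<Rightarrow> ('x \<Rightarrow> real) \<Rightarrow> bool" where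
  "Fp b p U f \<longleftrightarrow> (\<forall>x\<in>U. (\<lambda>y. b x y * \<bar>f x - f y\<bar> powr (p - 1)) summable_on UNIV)"

definition p_laplacian :: "('x \<Rightarrow> 'x \<Rightarrow> real) \<Rightarrow> ('x \<Rightarrow> real) \<Rightarrow> real \<Rightarrow> ('x \<Rightarrow> real) \<Rightarrow> 'x \<Rightarrow> real" where
  "p_laplacian b m p f x = (1 / m x) * (\<Sum>\<^sub>\<infinity>y. b x y * sgnpow p (f x - f y))"

definition energy :: "('x \<Rightarrow> 'x \<Rightarrow> real) \<Rightarrow> real \<Rightarrow> 'x set \<Rightarrow> ('x \<Rightarrow> real) \<Rightarrow> ('x \<Rightarrow> real) \<Rightarrow> real" where
  "energy b p U u w = 1 / 2 * (\<Sum>\<^sub>\<infinity>(x, y)\<in>U \<times> U. b x y * sgnpow p (u x - u y) * (w x - w y))"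

definition Dp :: "('x \<Rightarrow> 'x \<Rightarrow> real) \<Rightarrow> real \<Rightarrow> 'x set \<Rightarrow> ('x \<Rightarrow> real) \<Rightarrow> bool" where
  "Dp b p A v \<longleftrightarrow> (\<lambda>(x, y). b x y * \<bar>v x - v y\<bar> powr p) summable_on (A \<times> A)"

definition Kset :: "('x \<Rightarrow> 'x \<Rightarrow> real) \<Rightarrow> real \<Rightarrow> ('x \<Rightarrow> real) \<Rightarrow> ('x \<Rightarrow> real) \<Rightarrow> 'x set \<Rightarrow> ('x \<Rightarrow> real) set" where
  "Kset b p \<psi> \<theta> W = {v. Dp b p (gclosure b W) v \<and> (\<forall>x\<in>W. v x \<ge> \<psi> x) \<and> (\<forall>x\<in>ext_boundary b W. v x = \<theta> x)}"

definition obstacle_solution :: "('x \<Rightarrow> 'x \<Rightarrow> real) \<Rightarrow> real \<Rightarrow> ('x \<Rightarrow> real) \<Rightarrow> ('x \<Rightarrow> real) \<Rightarrow> 'x set \<Rightarrow> ('x \<Rightarrow> real) \<Rightarrow> bool" where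
  "obstacle_solution b p \<psi> \<theta> W u \<longleftrightarrow> u \<in> Kset b p \<psi> \<theta> W \<and>
     (\<forall>v\<in>Kset b p \<psi> \<theta> W. energy b p (gclosure b W) u (\<lambda>x. v x - u x) \<ge> 0)"

end

theory Submission
  imports Defs
begin

(* Suppose u - v had a positive maximum M on W, attained at z.  On the exterior boundary
   u = \<theta> = min u v, so u \<le> v there; and v \<ge> \<psi> on W gives u z > \<psi> z.  Lowering u at z to \<psi> z
   is therefore an admissible competitor, and the variational inequality yields
   \<Delta>\<^sub>p u z \<le> 0 \<le> \<Delta>\<^sub>p v z.  Since sgnpow p is strictly increasing and u - v is maximal at z,
   the two sums can only compare this way if u - v = M at every neighbour of z, which then lies
   in W.  So the finite set where u - v = M is closed under taking neighbours, which is
   impossible in an infinite connected graph. *)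

lemma sgnpow_eq_sgn_mult: "sgnpow p a = sgn a * \<bar>a\<bar> powr (p - 1)"
proof -
  have "sgnpow p a = sgn a * (\<bar>a\<bar> * \<bar>a\<bar> powr (p - 2))"
    unfolding sgnpow_def by (metis mult.commute mult.left_commute sgn_mult_abs)
  also have "\<bar>a\<bar> * \<bar>a\<bar> powr (p - 2) = \<bar>a\<bar> powr (p - 1)"
    by (simp add: powr_mult_base)
  finally show ?thesis .
qed

lemma sgnpow_nonneg: "0 \<le> a \<Longrightarrow> sgnpow p a = a powr (p - 1)"
  by (cases "a = 0") (simp_all add: sgnpow_eq_sgn_mult)

lemma sgnpow_minus: "sgnpow p (- a) = - sgnpow p a"
  by (simp add: sgnpow_def)

lemma sgnpow_zero [simp]: "sgnpow p 0 = 0"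
  by (simp add: sgnpow_def)

lemma abs_sgnpow: "\<bar>sgnpow p a\<bar> = \<bar>a\<bar> powr (p - 1)"
  by (cases "a = 0") (simp_all add: sgnpow_eq_sgn_mult abs_mult)

lemma strict_mono_sgnpow:
  assumes "p > 1"
  shows "strict_mono (sgnpow p)"
proof (rule strict_monoI)
  have nonneg: "sgnpow p a < sgnpow p c" if "0 \<le> a" "a < c" for a c
    using that assms by (simp add: sgnpow_nonneg powr_less_mono2)
  fix a c :: real
  assume "a < c"
  consider "0 \<le> a" | "a < 0" "0 \<le> c" | "c < 0" by linarith
  then show "sgnpow p a < sgnpow p c"
  proof cases
    case 1
    then show ?thesis using \<open>a < c\<close> nonneg by blast
  next
    case 2
    then have "sgnpow p a = - ((- a) powr (p - 1))"
      using sgnpow_minus[of p "- a"] sgnpow_nonneg[of "- a" p] by simp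
    moreover have "0 < (- a) powr (p - 1)"
      using 2 by simp
    moreover have "0 \<le> sgnpow p c"
      using 2 by (simp add: sgnpow_nonneg)
    ultimately show ?thesis by linarith
  next
    case 3
    then have "sgnpow p (- c) < sgnpow p (- a)"
      using \<open>a < c\<close> nonneg by simp
    then show ?thesis by (simp add: sgnpow_minus)
  qed
qed

lemma powr_add_le:
  fixes a c p :: real
  assumes "0 \<le> a" "0 \<le> c" "0 \<le> p"
  shows "(a + c) powr p \<le> 2 powr p * (a powr p + c powr p)"
proof -
  have "(a + c) powr p \<le> (2 * max a c) powr p"
    using assms by (intro powr_mono2) auto
  also have "\<dots> = 2 powr p * max a c powr p"
    using assms by (simp add: powr_mult)
  also have "\<dots> \<le> 2 powr p * (a powr p + c powr p)"
    by (intro mult_left_mono) (auto simp: max_def)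
  finally show ?thesis .
qed

lemma powr_diff_one_le:
  fixes d p :: real
  assumes "1 \<le> p" "0 \<le> d"
  shows "d powr (p - 1) \<le> 1 + d powr p"
proof (cases "d \<le> 1")
  case True
  then have "d powr (p - 1) \<le> 1"
    using assms by (intro powr_le1) auto
  then show ?thesis by (smt (verit) powr_ge_zero)
next
  case False
  then have "d powr (p - 1) \<le> d powr p"
    by (intro powr_mono) auto
  then show ?thesis by simp
qed

lemma has_sum_row_col:
  fixes H :: "'a \<Rightarrow> 'a \<Rightarrow> 'b::topological_comm_monoid_add"
  assumes "z \<in> A" and off_cross: "\<And>x y. x \<noteq> z \<Longrightarrow> y \<noteq> z \<Longrightarrow> H x y = 0" and "H z z = 0"
    and row: "((\<lambda>y. H z y) has_sum r) A" and col: "((\<lambda>x. H x z) has_sum c) A"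
  shows "((\<lambda>(x, y). H x y) has_sum (r + c)) (A \<times> A)"
proof -
  define H1 where "H1 = (\<lambda>(x, y). if x = z then H x y else 0)"
  define H2 where "H2 = (\<lambda>(x, y). if x = z then 0 else H x y)"
  have "((\<lambda>(x, y). H x y) has_sum r) (Pair z ` A)"
    using row by (subst has_sum_reindex) (auto simp: inj_on_def o_def)
  then have "(H1 has_sum r) (A \<times> A)"
    by (rule has_sum_cong_neutral[THEN iffD1, rotated -1]) (auto simp: H1_def \<open>z \<in> A\<close>)
  moreover have "((\<lambda>(x, y). H x y) has_sum c) ((\<lambda>x. (x, z)) ` A)"
    using col by (subst has_sum_reindex) (auto simp: inj_on_def o_def)
  then have "(H2 has_sum c) (A \<times> A)"
    by (rule has_sum_cong_neutral[THEN iffD1, rotated -1])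
      (auto simp: H2_def \<open>z \<in> A\<close> \<open>H z z = 0\<close> off_cross image_iff)
  ultimately have "((\<lambda>q. H1 q + H2 q) has_sum (r + c)) (A \<times> A)"
    by (rule has_sum_add)
  moreover have "(\<lambda>q. H1 q + H2 q) = (\<lambda>(x, y). H x y)"
    by (auto simp: H1_def H2_def)
  ultimately show ?thesis by simp
qed

lemma Dp_add:
  assumes "\<forall>x y. 0 \<le> b x y" "0 \<le> p" "Dp b p A f" "Dp b p A g"
  shows "Dp b p A (\<lambda>x. f x + g x)"
  unfolding Dp_def
proof (rule summable_on_comparison_test)
  show "(\<lambda>(x, y). 2 powr p * (b x y * \<bar>f x - f y\<bar> powr p) + 2 powr p * (b x y * \<bar>g x - g y\<bar> powr p))
      summable_on A \<times> A"
    using summable_on_add[OF summable_on_cmult_right summable_on_cmult_right, OF assms(3,4)[unfolded Dp_def]]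
    by (simp add: case_prod_unfold)
  fix q assume "q \<in> A \<times> A"
  obtain x y where q: "q = (x, y)" by fastforce
  have "\<bar>f x + g x - (f y + g y)\<bar> powr p \<le> (\<bar>f x - f y\<bar> + \<bar>g x - g y\<bar>) powr p"
    using assms(2) by (intro powr_mono2) auto
  also have "\<dots> \<le> 2 powr p * (\<bar>f x - f y\<bar> powr p + \<bar>g x - g y\<bar> powr p)"
    using assms(2) by (intro powr_add_le) auto
  finally have "b x y * \<bar>f x + g x - (f y + g y)\<bar> powr p
      \<le> b x y * (2 powr p * (\<bar>f x - f y\<bar> powr p + \<bar>g x - g y\<bar> powr p))"
    using assms(1) by (intro mult_left_mono) auto
  then show "(\<lambda>(x, y). b x y * \<bar>f x + g x - (f y + g y)\<bar> powr p) q
      \<le> (\<lambda>(x, y). 2 powr p * (b x y * \<bar>f x - f y\<bar> powr p) + 2 powr p * (b x y * \<bar>g x - g y\<bar> powr p)) q"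
    by (simp add: q algebra_simps)
  show "0 \<le> (\<lambda>(x, y). b x y * \<bar>f x + g x - (f y + g y)\<bar> powr p) q"
    using assms(1) by (simp add: q)
qed

lemma Dp_cmult:
  assumes "Dp b p A f"
  shows "Dp b p A (\<lambda>x. a * f x)"
proof -
  have "(\<lambda>(x, y). b x y * \<bar>a * f x - a * f y\<bar> powr p)
      = (\<lambda>q. \<bar>a\<bar> powr p * (\<lambda>(x, y). b x y * \<bar>f x - f y\<bar> powr p) q)"
    by (auto simp: fun_eq_iff powr_mult abs_mult simp flip: right_diff_distrib)
  then show ?thesis
    using summable_on_cmult_right assms by (simp add: Dp_def)
qed

lemma Dp_indicator:
  assumes "\<forall>x y. b x y = b y x" "z \<in> A" "b z summable_on A" "0 < p"
  shows "Dp b p A (indicator {z})"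
proof -
  define H where "H x y = b x y * \<bar>indicator {z} x - indicator {z} y\<bar> powr p" for x y :: 'a
  have "(\<lambda>y. H z y) summable_on A \<longleftrightarrow> b z summable_on A - {z}"
    using assms(4) by (intro summable_on_cong_neutral) (auto simp: H_def indicator_def)
  then obtain r where "((\<lambda>y. H z y) has_sum r) A"
    using summable_on_subset_banach[OF assms(3)] by (auto simp: summable_on_def)
  moreover have "(\<lambda>x. H x z) = (\<lambda>y. H z y)"
    using assms(1) by (auto simp: H_def fun_eq_iff abs_minus_commute)
  ultimately have "((\<lambda>(x, y). H x y) has_sum (r + r)) (A \<times> A)"
    using assms(2,4) by (intro has_sum_row_col) (auto simp: H_def indicator_def)
  then show ?thesis
    by (auto simp: Dp_def H_def summable_on_def)
qed

lemma Dp_fun_upd: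
  assumes "\<forall>x y. 0 \<le> b x y" "\<forall>x y. b x y = b y x" "z \<in> A" "b z summable_on A" "0 < p" "Dp b p A u"
  shows "Dp b p A (u(z := a))"
proof -
  have "u(z := a) = (\<lambda>x. u x + (a - u z) * indicator {z} x)"
    by (auto simp: fun_eq_iff)
  then show ?thesis
    using assms by (auto intro!: Dp_add Dp_cmult Dp_indicator)
qed

lemma neighbour_in_gclosure:
  assumes "\<forall>x y. b x y = b y x" "z \<in> W" "0 < b z y"
  shows "y \<in> gclosure b W"
  using assms by (auto simp: gclosure_def ext_boundary_def)

lemma Dp_gclosure_imp_Fp:
  assumes "\<forall>x y. 0 \<le> b x y" "\<forall>x y. b x y = b y x" "\<forall>x. b x summable_on UNIV" "1 \<le> p"
    and "Dp b p (gclosure b W) g"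
  shows "Fp b p W g"
  unfolding Fp_def
proof
  fix z assume "z \<in> W"
  define S where "S = gclosure b W"
  have "z \<in> S" using \<open>z \<in> W\<close> by (simp add: S_def gclosure_def)
  have "(\<lambda>(x, y). b x y * \<bar>g x - g y\<bar> powr p) summable_on Pair z ` S"
    using assms(5) unfolding Dp_def S_def[symmetric]
    by (rule summable_on_subset_banach) (auto simp: \<open>z \<in> S\<close>)
  then have "(\<lambda>y. b z y * \<bar>g z - g y\<bar> powr p) summable_on S"
    by (subst (asm) summable_on_reindex) (auto simp: inj_on_def o_def)
  moreover have "b z y = 0" if "y \<notin> S" for y
    using neighbour_in_gclosure[OF assms(2) \<open>z \<in> W\<close>, of y] assms(1) that
    by (fastforce simp: S_def order_le_less)
  ultimately have "(\<lambda>y. b z y * \<bar>g z - g y\<bar> powr p) summable_on UNIV"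
    by (subst (asm) summable_on_cong_neutral[where T = UNIV]) auto
  then have "(\<lambda>y. b z y + b z y * \<bar>g z - g y\<bar> powr p) summable_on UNIV"
    using assms(3) by (intro summable_on_add) auto
  then show "(\<lambda>y. b z y * \<bar>g z - g y\<bar> powr (p - 1)) summable_on UNIV"
  proof (rule summable_on_comparison_test)
    fix y
    have "b z y * \<bar>g z - g y\<bar> powr (p - 1) \<le> b z y * (1 + \<bar>g z - g y\<bar> powr p)"
      using assms(1,4) by (intro mult_left_mono powr_diff_one_le) auto
    then show "b z y * \<bar>g z - g y\<bar> powr (p - 1) \<le> b z y + b z y * \<bar>g z - g y\<bar> powr p"
      by (simp add: algebra_simps)
    show "0 \<le> b z y * \<bar>g z - g y\<bar> powr (p - 1)"
      using assms(1) by simp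
  qed
qed

lemma Fp_sgnpow_summable:
  assumes "Fp b p U g" "z \<in> U" "\<forall>y. 0 \<le> b z y"
  shows "(\<lambda>y. b z y * sgnpow p (g z - g y)) summable_on UNIV"
proof -
  have "(\<lambda>y. norm (b z y * sgnpow p (g z - g y))) = (\<lambda>y. b z y * \<bar>g z - g y\<bar> powr (p - 1))"
    using assms(3) by (simp add: abs_mult abs_sgnpow)
  then show ?thesis
    using assms(1,2) summable_on_iff_abs_summable_on_real[of "\<lambda>y. b z y * sgnpow p (g z - g y)"]
    by (simp add: Fp_def)
qed

lemma energy_fun_upd:
  assumes "\<forall>x y. b x y = b y x" "z \<in> U" "(\<lambda>y. b z y * sgnpow p (u z - u y)) summable_on U"
  shows "energy b p U u (\<lambda>x. (u(z := a)) x - u x) = (a - u z) * (\<Sum>\<^sub>\<infinity>y\<in>U. b z y * sgnpow p (u z - u y))"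
proof -
  define R where "R = (\<lambda>y. b z y * sgnpow p (u z - u y))"
  define H where "H x y = b x y * sgnpow p (u x - u y) * ((u(z := a)) x - u x - ((u(z := a)) y - u y))"
    for x y
  have row: "(\<lambda>y. H z y) = (\<lambda>y. (a - u z) * R y)"
    by (auto simp: fun_eq_iff H_def R_def)
  have "sgnpow p (u x - u z) = - sgnpow p (u z - u x)" for x
    using sgnpow_minus[of p "u z - u x"] by simp
  then have col: "(\<lambda>x. H x z) = (\<lambda>y. (a - u z) * R y)"
    using assms(1) by (auto simp: fun_eq_iff H_def R_def) (simp add: algebra_simps)
  have R: "((\<lambda>y. (a - u z) * R y) has_sum ((a - u z) * infsum R U)) U"
    using assms(3) unfolding R_def by (intro has_sum_cmult_right has_sum_infsum)
  have "((\<lambda>(x, y). H x y) has_sum ((a - u z) * infsum R U + (a - u z) * infsum R U)) (U \<times> U)"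
  proof (rule has_sum_row_col)
    show "((\<lambda>y. H z y) has_sum ((a - u z) * infsum R U)) U"
      unfolding row by (fact R)
    show "((\<lambda>x. H x z) has_sum ((a - u z) * infsum R U)) U"
      unfolding col by (fact R)
  qed (auto simp: H_def assms(2))
  then show ?thesis
    by (simp add: energy_def H_def R_def infsumI)
qed

lemma obstacle_solution_p_laplacian_nonpos:
  assumes "weighted_graph b m c" "1 < p" "obstacle_solution b p \<psi> \<theta> W u" "z \<in> W" "\<psi> z < u z"
  shows "p_laplacian b m p u z \<le> 0"
proof -
  have b_sym: "\<forall>x y. b x y = b y x" and b_nonneg: "\<forall>x y. 0 \<le> b x y"
    and b_summable: "\<forall>x. b x summable_on UNIV" and "0 < m z"
    using assms(1) by (simp_all add: weighted_graph_def)
  define S where "S = gclosure b W"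
  define R where "R = (\<lambda>y. b z y * sgnpow p (u z - u y))"
  have "z \<in> S" using assms(4) by (simp add: S_def gclosure_def)
  have u: "u \<in> Kset b p \<psi> \<theta> W" "\<And>w. w \<in> Kset b p \<psi> \<theta> W \<Longrightarrow> 0 \<le> energy b p S u (\<lambda>x. w x - u x)"
    using assms(3) by (auto simp: obstacle_solution_def S_def)
  have "Dp b p S (u(z := \<psi> z))"
    using b_sym b_nonneg b_summable assms(2) u(1) \<open>z \<in> S\<close> summable_on_subset_banach[of "b z" UNIV S]
    by (intro Dp_fun_upd) (auto simp: Kset_def S_def)
  then have "u(z := \<psi> z) \<in> Kset b p \<psi> \<theta> W"
    using u(1) assms(4) by (auto simp: Kset_def S_def ext_boundary_def)
  then have "0 \<le> energy b p S u (\<lambda>x. (u(z := \<psi> z)) x - u x)"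
    by (rule u(2))
  moreover have R: "R summable_on UNIV"
    using b_sym b_nonneg b_summable assms(2,4) u(1) unfolding R_def
    by (intro Fp_sgnpow_summable[where U = W] Dp_gclosure_imp_Fp) (auto simp: Kset_def)
  moreover have "energy b p S u (\<lambda>x. (u(z := \<psi> z)) x - u x) = (\<psi> z - u z) * infsum R S"
    using b_sym \<open>z \<in> S\<close> summable_on_subset_banach[OF R]
    unfolding R_def by (intro energy_fun_upd) auto
  ultimately have "infsum R S \<le> 0"
    using assms(5) by (simp add: zero_le_mult_iff)
  moreover have "R y = 0" if "y \<notin> S" for y
  proof -
    have "\<not> 0 < b z y"
      using that neighbour_in_gclosure[OF b_sym assms(4)] by (auto simp: S_def)
    then show ?thesis
      using b_nonneg[rule_format, of z y] by (simp add: R_def)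
  qed
  then have "infsum R UNIV = infsum R S"
    by (intro infsum_cong_neutral) auto
  ultimately show ?thesis
    using \<open>0 < m z\<close> unfolding p_laplacian_def R_def[symmetric] by (simp add: divide_nonpos_pos)
qed

lemma p_laplacian_le_imp_diff_eq_at_neighbour:
  assumes "1 < p" "0 < m z" "\<forall>y. 0 \<le> b z y" "Fp b p U u" "Fp b p U v" "z \<in> U"
    and "p_laplacian b m p u z \<le> p_laplacian b m p v z"
    and max: "\<And>y. 0 < b z y \<Longrightarrow> u y - v y \<le> u z - v z"
    and "0 < b z y"
  shows "u y - v y = u z - v z"
proof -
  define Ru where "Ru = (\<lambda>y. b z y * sgnpow p (u z - u y))"
  define Rv where "Rv = (\<lambda>y. b z y * sgnpow p (v z - v y))"
  have Ru: "Ru summable_on UNIV" and Rv: "Rv summable_on UNIV"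
    using assms(3-6) unfolding Ru_def Rv_def by (auto intro: Fp_sgnpow_summable)
  have mono: "strict_mono (sgnpow p)"
    using assms(1) by (rule strict_mono_sgnpow)
  have "0 \<le> Ru y' - Rv y'" for y'
  proof (cases "0 < b z y'")
    case True
    then have "sgnpow p (v z - v y') \<le> sgnpow p (u z - u y')"
      using max[of y'] strict_mono_less_eq[OF mono] by simp
    then show ?thesis
      using assms(3) by (simp add: Ru_def Rv_def mult_left_mono flip: right_diff_distrib)
  next
    case False
    then show ?thesis
      using assms(3)[rule_format, of y'] by (simp add: Ru_def Rv_def)
  qed
  moreover have "infsum Ru UNIV \<le> infsum Rv UNIV"
    using assms(2,7) by (simp add: p_laplacian_def divide_le_cancel flip: Ru_def Rv_def)
  moreover have "((\<lambda>y'. Ru y' + -1 * Rv y') has_sum (infsum Ru UNIV + -1 * infsum Rv UNIV)) UNIV"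
    using Ru Rv by (intro has_sum_add has_sum_cmult_right has_sum_infsum)
  then have D: "((\<lambda>y'. Ru y' - Rv y') has_sum (infsum Ru UNIV - infsum Rv UNIV)) UNIV"
    by simp
  ultimately have "Ru y - Rv y = 0"
    using infsumI[OF D] has_sum_imp_summable[OF D]
    by (intro nonneg_infsum_le_0D[where A = UNIV]) auto
  then have "sgnpow p (u z - u y) = sgnpow p (v z - v y)"
    using assms(9) by (simp add: Ru_def Rv_def flip: right_diff_distrib)
  then show ?thesis
    using strict_mono_eq[OF mono] by simp
qed

lemma weighted_graph_edge_leaving_finite:
  assumes "weighted_graph b m c" "finite Z" "x \<in> Z"
  shows "\<exists>z\<in>Z. \<exists>y. y \<notin> Z \<and> 0 < b z y"
proof (rule ccontr)
  assume closed: "\<not> ?thesis"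
  have "y \<in> Z" for y
  proof -
    have "(\<lambda>s t. 0 < b s t)\<^sup>*\<^sup>* x y"
      using assms(1) by (simp add: weighted_graph_def)
    then show ?thesis
      by (induction rule: rtranclp_induct) (use assms(3) closed in auto)
  qed
  then show False
    using assms(1,2) finite_subset[of UNIV Z] by (auto simp: weighted_graph_def)
qed

lemma weighted_graph_max_principle:
  fixes f :: "'x \<Rightarrow> real"
  assumes "weighted_graph b m c" "finite W"
    and boundary: "\<forall>y\<in>ext_boundary b W. f y \<le> 0"
    and spread: "\<And>z y. z \<in> W \<Longrightarrow> 0 < f z \<Longrightarrow> \<forall>y'\<in>gclosure b W. f y' \<le> f z \<Longrightarrow> 0 < b z y
      \<Longrightarrow> f y = f z"
  shows "\<forall>x\<in>W. f x \<le> 0"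
proof (rule ccontr)
  assume "\<not> (\<forall>x\<in>W. f x \<le> 0)"
  then obtain x0 where x0: "x0 \<in> W" "0 < f x0" by auto
  have b_sym: "\<forall>x y. b x y = b y x"
    using assms(1) by (simp add: weighted_graph_def)
  define M where "M = Max (f ` W)"
  have le_M: "f x \<le> M" if "x \<in> W" for x
    using assms(2) that by (simp add: M_def)
  then have "0 < M"
    using x0 by force
  have le_M_closure: "\<forall>y\<in>gclosure b W. f y \<le> M"
    using le_M boundary \<open>0 < M\<close> by (force simp: gclosure_def)
  define Z where "Z = {x \<in> W. f x = M}"
  have "M \<in> f ` W"
    using assms(2) x0 unfolding M_def by (intro Max_in) auto
  then obtain x where "x \<in> Z" by (auto simp: Z_def)
  moreover have "finite Z"
    using assms(2) by (simp add: Z_def)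
  ultimately obtain z y where "z \<in> Z" "y \<notin> Z" "0 < b z y"
    using weighted_graph_edge_leaving_finite[OF assms(1)] by blast
  then have "z \<in> W" "f z = M" "f y = M"
    using spread[of z y] le_M_closure \<open>0 < M\<close> by (auto simp: Z_def)
  moreover have "y \<in> gclosure b W"
    using neighbour_in_gclosure[OF b_sym \<open>z \<in> W\<close> \<open>0 < b z y\<close>] .
  ultimately have "y \<in> Z"
    using boundary \<open>0 < M\<close> by (force simp: gclosure_def Z_def)
  with \<open>y \<notin> Z\<close> show False ..
qed

theorem lemma3p26:
  fixes b :: "'x \<Rightarrow> 'x \<Rightarrow> real" and m c \<psi> \<theta> u v :: "'x \<Rightarrow> real" and p :: real and W :: "'x set"
  assumes "weighted_graph b m c" and "c = (\<lambda>_. 0)" and "p > 1" and "finite W"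
    and "obstacle_solution b p \<psi> \<theta> W u"
    and "Fp b p (gclosure b W) v \<or> Dp b p (gclosure b W) v"
    and "\<forall>x\<in>W. p_laplacian b m p v x \<ge> 0"
    and "(\<lambda>x. min (u x) (v x)) \<in> Kset b p \<psi> \<theta> W"
  shows "\<forall>x\<in>W. v x \<ge> u x"
proof -
  have b_sym: "\<forall>x y. b x y = b y x" and b_nonneg: "\<forall>x y. 0 \<le> b x y"
    and b_summable: "\<forall>x. b x summable_on UNIV" and m_pos: "\<forall>x. 0 < m x"
    using assms(1) by (simp_all add: weighted_graph_def)
  have u_K: "u \<in> Kset b p \<psi> \<theta> W"
    using assms(5) by (simp add: obstacle_solution_def)
  have Fp_u: "Fp b p W u" and Fp_v: "Fp b p W v"
    using assms(3,6) u_K b_sym b_nonneg b_summable Dp_gclosure_imp_Fp[of b p W]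
    by (auto simp: Kset_def Fp_def gclosure_def)
  have "\<forall>x\<in>W. u x - v x \<le> 0"
  proof (rule weighted_graph_max_principle[OF assms(1,4)])
    show "\<forall>y\<in>ext_boundary b W. u y - v y \<le> 0"
      using assms(8) u_K by (auto simp: Kset_def)
    fix z y
    assume z: "z \<in> W" "0 < u z - v z" and max: "\<forall>y'\<in>gclosure b W. u y' - v y' \<le> u z - v z"
      and "0 < b z y"
    have "\<psi> z < u z"
      using assms(8) z by (auto simp: Kset_def)
    then have lap: "p_laplacian b m p u z \<le> p_laplacian b m p v z"
      using obstacle_solution_p_laplacian_nonpos[OF assms(1,3,5) z(1)] assms(7) z(1) by force
    show "u y - v y = u z - v z"
      using p_laplacian_le_imp_diff_eq_at_neighbour[OF assms(3) _ _ Fp_u Fp_v z(1) lap _ \<open>0 < b z y\<close>]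
        max neighbour_in_gclosure[OF b_sym z(1)] m_pos b_nonneg
      by simp
  qed
  then show ?thesis
    by auto
qed

end
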